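(* Consider two oscillator modes $a_{in}$ and $b$ with Fock bases, and let $V$ be the two-mode squeezing unitary $V=\exp\big(r(a_{in}^{*}b^{*}-a_{in}b)\big)$ with $\cosh r=\sqrt2$, so that in the Heisenberg picture the output mode is $a_{amp}=V^{*}a_{in}V=\sqrt2\,a_{in}+b^{*}$. Prepare $a_{in}$ in the thermal state $\Phi^{0}=\sum_{n\ge0}p_n|n\rangle\langle n|$, $p_n=(1-s)s^{n}$ with fixed $0<s<1$, and $b$ in an arbitrary diagonal state $\tau=\sum_{n\ge0}\tau_n|n\rangle\langle n|$. Let $q^{\tau}=\{q^{\tau}_{l}\}_{l\ge0}$ be the diagonal of the resulting output state $\mathrm{Tr}_{b}\big(V(\Phi^{0}\otimes\tau)V^{*}\big)$ of the mode $a_{amp}$ in the Fock basis, and let $\omega=|0\rangle\langle0|$ be the vacuum. Then $q^{\omega}\preceq q^{\tau}$.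
   Context: For probability distributions $p,q$ on $\mathbb{N}=\{0,1,2,\dots\}$, $p$ is stochastically smaller than $q$, written $p\preceq q$, if $\sum_{l=0}^{m}p_{l}\ge\sum_{l=0}^{m}q_{l}$ for all $m\ge0$. (The output state of $a_{amp}$ is diagonal in the Fock basis.) *)

theory Defs
  imports Complex_Main
begin

text \<open>Fock-basis matrix elements of the two-mode squeezing unitary
  V = exp(r (a* b* - a b)), i.e. sq_amp r n m n' m' = <n',m'| V |n,m>, computed via the
  standard SU(1,1) disentangling identity
  V = exp(tanh r a*b*) (cosh r)^(-(a*a + b*b + 1)) exp(-tanh r a b).
  V conserves the photon-number difference, so the element vanishes unless n'-n = m'-m.\<close>
definition sq_amp :: "real \<Rightarrow> nat \<Rightarrow> nat \<Rightarrow> nat \<Rightarrow> nat \<Rightarrow> real" where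
  "sq_amp r n m n' m' =
     (if n' + m = m' + n then
        (\<Sum>j\<in>{..min n m}.
           if n \<le> n' + j then
             (- tanh r) ^ j * tanh r ^ (n' + j - n) / (fact j * fact (n' + j - n))
             * sqrt (fact n * fact m * fact n' * fact m') / (fact (n - j) * fact (m - j))
             * (1 / cosh r) ^ (n + m - 2 * j + 1)
           else 0)
      else 0)"

definition thermal :: "real \<Rightarrow> nat \<Rightarrow> real" where
  "thermal s n = (1 - s) * s ^ n"

text \<open>Diagonal (Fock basis) of Tr_b (V (Phi0 \<otimes> tau) V*), with Phi0 thermal(s) and
  tau = sum_m tau_m |m><m|:  q_l = sum_n sum_m p_n tau_m sum_k |<l,k|V|n,m>|^2.\<close>
definition amp_out :: "real \<Rightarrow> real \<Rightarrow> (nat \<Rightarrow> real) \<Rightarrow> nat \<Rightarrow> real" where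
  "amp_out r s \<tau> l =
     (\<Sum>n. \<Sum>m. thermal s n * \<tau> m * (\<Sum>k. (sq_amp r n m l k)\<^sup>2))"

definition stoch_le :: "(nat \<Rightarrow> real) \<Rightarrow> (nat \<Rightarrow> real) \<Rightarrow> bool" where
  "stoch_le p q \<longleftrightarrow> (\<forall>m. (\<Sum>l\<le>m. p l) \<ge> (\<Sum>l\<le>m. q l))"

definition vacuum :: "nat \<Rightarrow> real" where
  "vacuum m = (if m = 0 then 1 else 0)"

end

theory Submission
  imports Defs "HOL-Computational_Algebra.Polynomial" "HOL-Analysis.Infinite_Sum"
begin

text \<open>
  With \<open>tanh r = 1/\<surd>2\<close>, the matrix element \<open>\<langle>l,k|V|n,m\<rangle>\<close> is, up to factorials and
  a power of \<open>\<surd>2\<close>, the \<open>n\<close>-th coefficient of \<open>(1 - x)^m (1 + x)^l\<close>. Averaging its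
  square against the thermal weights \<open>(1 - s) s^n\<close> gives a weighted pairing of two such
  polynomials, which is evaluated by moving the factors \<open>1 - x\<close> to the other side one at a
  time: multiplication by \<open>1 - x\<close> is adjoint to \<open>B \<mapsto> (N + 1) B - (x + s) B'\<close>.
  With \<open>e = (1 - s)/2\<close>, the output for \<open>b\<close> in \<open>|m\<rangle>\<close> comes out as the
  Binomial\<open>(m, e)\<close> mixture of the negative binomial laws
  \<open>C(l, j) e^(j+1) (1 - e)^(l - j)\<close>, \<open>j \<le> m\<close>; the vacuum keeps only \<open>j = 0\<close>.
  Negative binomial laws increase stochastically in \<open>j\<close>, so each of these outputs, and
  therefore every mixture of them produced by a diagonal \<open>\<tau>\<close>, dominates the vacuum output.
\<close>

section \<open>Krawtchouk generating polynomials and a thermal pairing\<close>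

lemma coeff_linear_poly_power':
  fixes a b :: "'a :: comm_semiring_1"
  shows "coeff ([:a, b:] ^ n) i = of_nat (n choose i) * b ^ i * a ^ (n - i)"
proof (cases "i \<le> n")
  case True
  then show ?thesis by (rule coeff_linear_poly_power)
next
  case False
  have "degree ([:a, b:] ^ n) \<le> n"
    by (rule order.trans[OF degree_power_le]) simp
  with False show ?thesis by (simp add: coeff_eq_0 binomial_eq_0)
qed

text \<open>The \<open>n\<close>-th coefficient is the Krawtchouk polynomial \<open>K\<^sub>n(m; m + l)\<close>.\<close>

definition krawtchouk_gf :: "nat \<Rightarrow> nat \<Rightarrow> real poly" where
  "krawtchouk_gf m l = [:1, -1:] ^ m * [:1, 1:] ^ l"

lemma poly_krawtchouk_gf: "poly (krawtchouk_gf m l) x = (1 - x) ^ m * (1 + x) ^ l"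
  by (simp add: krawtchouk_gf_def poly_power)

lemma degree_krawtchouk_gf: "degree (krawtchouk_gf m l) \<le> m + l"
  unfolding krawtchouk_gf_def
  by (rule order.trans[OF degree_mult_le]) (auto intro!: add_mono order.trans[OF degree_power_le])

lemma coeff_krawtchouk_gf_eq_0: "m + l < n \<Longrightarrow> coeff (krawtchouk_gf m l) n = 0"
  using degree_krawtchouk_gf by (intro coeff_eq_0) (blast intro: le_less_trans)

lemma krawtchouk_gf_Suc: "krawtchouk_gf (Suc m) l = [:1, -1:] * krawtchouk_gf m l"
  by (simp only: krawtchouk_gf_def power_Suc mult.assoc)

lemma coeff_krawtchouk_gf:
  "coeff (krawtchouk_gf m l) n = (\<Sum>j\<le>n. (-1) ^ j * of_nat (m choose j) * of_nat (l choose (n - j)))"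
  unfolding krawtchouk_gf_def coeff_mult coeff_linear_poly_power' by (simp add: mult_ac)

lemma pderiv_krawtchouk_gf:
  "pderiv (krawtchouk_gf p q)
     = smult (- real p) (krawtchouk_gf (p - 1) q) + smult (real q) (krawtchouk_gf p (q - 1))"
  by (simp add: krawtchouk_gf_def pderiv_mult pderiv_power pderiv_pCons algebra_simps)

definition thermal_pairing :: "real \<Rightarrow> nat \<Rightarrow> real poly \<Rightarrow> real poly \<Rightarrow> real" where
  "thermal_pairing s N A B = (\<Sum>n\<le>N. s ^ n * fact n * fact (N - n) * coeff A n * coeff B n)"

lemma thermal_pairing_linear_right:
  "thermal_pairing s N A (smult a B + smult b C)
     = a * thermal_pairing s N A B + b * thermal_pairing s N A C"
  unfolding thermal_pairing_def sum_distrib_left sum.distrib[symmetric]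
  by (intro sum.cong) (auto simp: algebra_simps)

lemma thermal_pairing_adjoint:
  assumes "degree A \<le> N"
  shows "thermal_pairing s (Suc N) ([:1, -1:] * A) B
           = thermal_pairing s N A (smult (of_nat (Suc N)) B - [:s, 1:] * pderiv B)"
proof -
  have coeff_adjoint_op: "coeff (smult (of_nat (Suc N)) B - [:s, 1:] * pderiv B) n
      = (real (Suc N) - real n) * coeff B n - s * real (Suc n) * coeff B (Suc n)" for n
    by (cases n) (simp_all add: coeff_pderiv algebra_simps)
  define w where "w n = s ^ n * fact n * fact (Suc N - n)" for n
  have "thermal_pairing s (Suc N) ([:1, -1:] * A) B
      = (\<Sum>n\<le>Suc N. w n * coeff A n * coeff B n)
        - (\<Sum>n\<le>Suc N. w n * coeff (pCons 0 A) n * coeff B n)"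
    unfolding thermal_pairing_def w_def sum_subtractf[symmetric]
    by (intro sum.cong) (auto simp: algebra_simps coeff_pCons split: nat.split)
  also have "(\<Sum>n\<le>Suc N. w n * coeff A n * coeff B n) = (\<Sum>n\<le>N. w n * coeff A n * coeff B n)"
    using assms by (simp add: coeff_eq_0)
  also have "(\<Sum>n\<le>Suc N. w n * coeff (pCons 0 A) n * coeff B n)
      = (\<Sum>n\<le>N. w (Suc n) * coeff A n * coeff B (Suc n))"
    by (subst sum.atMost_Suc_shift) simp
  also have "(\<Sum>n\<le>N. w n * coeff A n * coeff B n) - (\<Sum>n\<le>N. w (Suc n) * coeff A n * coeff B (Suc n))
      = thermal_pairing s N A (smult (of_nat (Suc N)) B - [:s, 1:] * pderiv B)"
    unfolding thermal_pairing_def coeff_adjoint_op sum_subtractf[symmetric]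
  proof (intro sum.cong refl)
    fix n assume "n \<in> {..N}"
    then have fact_eq: "fact (Suc N - n) = (real (Suc N) - real n) * (fact (N - n) :: real)"
      by (simp add: Suc_diff_le of_nat_diff)
    show "w n * coeff A n * coeff B n - w (Suc n) * coeff A n * coeff B (Suc n)
        = s ^ n * fact n * fact (N - n) * coeff A n
          * ((real (Suc N) - real n) * coeff B n - s * real (Suc n) * coeff B (Suc n))"
      unfolding w_def fact_eq by (simp add: algebra_simps)
  qed
  finally show ?thesis .
qed

lemma adjoint_op_krawtchouk_gf:
  assumes "p + q = Suc N"
  shows "smult (of_nat (Suc N)) (krawtchouk_gf p q) - [:s, 1:] * pderiv (krawtchouk_gf p q)
       = smult ((1 + s) * real p) (krawtchouk_gf (p - 1) q)
         + smult ((1 - s) * real q) (krawtchouk_gf p (q - 1))"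
proof -
  define u where "u = krawtchouk_gf (p - 1) q"
  define v where "v = krawtchouk_gf p (q - 1)"
  have pK: "smult (real p) (krawtchouk_gf p q) = smult (real p) ([:1, -1:] * u)"
    unfolding u_def by (cases p) (simp_all add: krawtchouk_gf_Suc)
  have qK: "smult (real q) (krawtchouk_gf p q) = smult (real q) ([:1, 1:] * v)"
    unfolding v_def by (cases q) (simp_all add: krawtchouk_gf_def algebra_simps)
  have N: "smult (of_nat (Suc N)) (krawtchouk_gf p q)
      = smult (real p) (krawtchouk_gf p q) + smult (real q) (krawtchouk_gf p q)"
    using assms by (simp flip: smult_add_left of_nat_add)
  show ?thesis
    unfolding pderiv_krawtchouk_gf u_def[symmetric] v_def[symmetric] N pK qK
    by (rule poly_ext) (simp add: algebra_simps)
qed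

lemma thermal_pairing_krawtchouk_gf_0:
  assumes "degree B \<le> l"
  shows "thermal_pairing s l (krawtchouk_gf 0 l) B = fact l * poly B s"
proof -
  have "thermal_pairing s l (krawtchouk_gf 0 l) B = fact l * (\<Sum>n\<le>l. coeff B n * s ^ n)"
    unfolding thermal_pairing_def sum_distrib_left
  proof (intro sum.cong refl)
    fix n assume "n \<in> {..l}"
    then have "real (l choose n) * fact n * fact (l - n) = fact l"
      by (simp add: binomial_fact)
    then show "s ^ n * fact n * fact (l - n) * coeff (krawtchouk_gf 0 l) n * coeff B n
        = fact l * (coeff B n * s ^ n)"
      by (simp add: krawtchouk_gf_def coeff_linear_poly_power' algebra_simps)
  qed
  also have "(\<Sum>n\<le>l. coeff B n * s ^ n) = poly B s"
    unfolding poly_altdef using assms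
    by (intro sum.mono_neutral_right) (auto simp: coeff_eq_0)
  finally show ?thesis .
qed

text \<open>
  \<open>kraw_pairing s m p q\<close> is \<open>((1 + s) \<partial>\<^sub>x + (1 - s) \<partial>\<^sub>y)^m (x^p y^q)\<close> evaluated at
  \<open>(x, y) = (1 - s, 1 + s)\<close>.
\<close>

fun kraw_pairing :: "real \<Rightarrow> nat \<Rightarrow> nat \<Rightarrow> nat \<Rightarrow> real" where
  "kraw_pairing s 0 p q = (1 - s) ^ p * (1 + s) ^ q"
| "kraw_pairing s (Suc m) p q
     = (1 + s) * real p * kraw_pairing s m (p - 1) q + (1 - s) * real q * kraw_pairing s m p (q - 1)"

lemma thermal_pairing_krawtchouk_gf:
  "p + q = m + l \<Longrightarrow>
     thermal_pairing s (m + l) (krawtchouk_gf m l) (krawtchouk_gf p q) = fact l * kraw_pairing s m p q"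
proof (induction m arbitrary: p q)
  case 0
  then show ?case
    using degree_krawtchouk_gf[of p q] by (simp add: thermal_pairing_krawtchouk_gf_0 poly_krawtchouk_gf)
next
  case (Suc m)
  have IH_p: "real p * thermal_pairing s (m + l) (krawtchouk_gf m l) (krawtchouk_gf (p - 1) q)
      = real p * (fact l * kraw_pairing s m (p - 1) q)"
    using Suc by (cases p) simp_all
  have IH_q: "real q * thermal_pairing s (m + l) (krawtchouk_gf m l) (krawtchouk_gf p (q - 1))
      = real q * (fact l * kraw_pairing s m p (q - 1))"
    using Suc by (cases q) simp_all
  have "thermal_pairing s (Suc m + l) (krawtchouk_gf (Suc m) l) (krawtchouk_gf p q)
      = thermal_pairing s (Suc (m + l)) ([:1, -1:] * krawtchouk_gf m l) (krawtchouk_gf p q)"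
    by (simp only: krawtchouk_gf_Suc add_Suc)
  also have "\<dots> = thermal_pairing s (m + l) (krawtchouk_gf m l)
      (smult (of_nat (Suc (m + l))) (krawtchouk_gf p q) - [:s, 1:] * pderiv (krawtchouk_gf p q))"
    by (rule thermal_pairing_adjoint[OF degree_krawtchouk_gf])
  also have "\<dots> = thermal_pairing s (m + l) (krawtchouk_gf m l)
      (smult ((1 + s) * real p) (krawtchouk_gf (p - 1) q)
       + smult ((1 - s) * real q) (krawtchouk_gf p (q - 1)))"
    using Suc.prems by (simp only: adjoint_op_krawtchouk_gf add_Suc)
  also have "\<dots> = fact l * kraw_pairing s (Suc m) p q"
    unfolding thermal_pairing_linear_right mult.assoc IH_p IH_q by (simp add: algebra_simps)
  finally show ?case .
qed

lemma of_nat_binomial_absorption: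
  "(of_nat n :: 'a :: semiring_1) * of_nat (n - 1 choose k) = of_nat (Suc k) * of_nat (n choose Suc k)"
proof -
  have "n * (n - 1 choose k) = Suc k * (n choose Suc k)"
    using times_binomial_minus1_eq[of "Suc k" n] by simp
  then show ?thesis by (metis of_nat_mult)
qed

lemma sum_complementary_weights:
  fixes T :: "nat \<Rightarrow> 'a :: comm_semiring_1"
  shows "(\<Sum>j\<le>m. of_nat (Suc m - j) * T j) + (\<Sum>j\<le>m. of_nat (Suc j) * T (Suc j))
           = of_nat (Suc m) * (\<Sum>j\<le>Suc m. T j)"
proof -
  have "(\<Sum>j\<le>m. of_nat (Suc m - j) * T j) + (\<Sum>j\<le>m. of_nat (Suc j) * T (Suc j))
      = (\<Sum>j\<le>Suc m. of_nat (Suc m - j) * T j) + (\<Sum>j\<le>Suc m. of_nat j * T j)"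
    by (simp only: sum.atMost_Suc_shift[of "\<lambda>j. of_nat j * T j"]) simp
  also have "\<dots> = of_nat (Suc m) * (\<Sum>j\<le>Suc m. T j)"
    unfolding sum_distrib_left sum.distrib[symmetric]
    by (intro sum.cong refl) (simp flip: distrib_right of_nat_add)
  finally show ?thesis .
qed

lemma kraw_pairing_closed_form:
  "kraw_pairing s m p q = fact m * (\<Sum>j\<le>m. of_nat (p choose (m - j)) * of_nat (q choose j)
                             * (1 + s) ^ (m - j + (q - j)) * (1 - s) ^ (j + (p - (m - j))))"
proof (induction m arbitrary: p q)
  case 0
  then show ?case by simp
next
  case (Suc m)
  define T where "T j = of_nat (p choose (Suc m - j)) * of_nat (q choose j)
                          * (1 + s) ^ (Suc m - j + (q - j)) * (1 - s) ^ (j + (p - (Suc m - j)))" for j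
  have p_branch: "(1 + s) * real p * (\<Sum>j\<le>m. of_nat (p - 1 choose (m - j)) * of_nat (q choose j)
                    * (1 + s) ^ (m - j + (q - j)) * (1 - s) ^ (j + (p - 1 - (m - j))))
      = (\<Sum>j\<le>m. real (Suc m - j) * T j)"
    unfolding sum_distrib_left
  proof (intro sum.cong refl)
    fix j assume "j \<in> {..m}"
    then have j: "Suc m - j = Suc (m - j)" by simp
    show "(1 + s) * real p * (of_nat (p - 1 choose (m - j)) * of_nat (q choose j)
            * (1 + s) ^ (m - j + (q - j)) * (1 - s) ^ (j + (p - 1 - (m - j))))
        = real (Suc m - j) * T j" (is "?lhs = _")
    proof -
      have "?lhs = real p * real (p - 1 choose (m - j)) * (real (q choose j)
                     * (1 + s) ^ Suc (m - j + (q - j)) * (1 - s) ^ (j + (p - Suc (m - j))))"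
        by (simp add: algebra_simps)
      also have "\<dots> = real (Suc m - j) * T j"
        unfolding of_nat_binomial_absorption T_def j by (simp add: algebra_simps)
      finally show ?thesis .
    qed
  qed
  have q_branch: "(1 - s) * real q * (\<Sum>j\<le>m. of_nat (p choose (m - j)) * of_nat (q - 1 choose j)
                    * (1 + s) ^ (m - j + (q - 1 - j)) * (1 - s) ^ (j + (p - (m - j))))
      = (\<Sum>j\<le>m. real (Suc j) * T (Suc j))"
    unfolding sum_distrib_left
  proof (intro sum.cong refl)
    fix j
    show "(1 - s) * real q * (of_nat (p choose (m - j)) * of_nat (q - 1 choose j)
            * (1 + s) ^ (m - j + (q - 1 - j)) * (1 - s) ^ (j + (p - (m - j))))
        = real (Suc j) * T (Suc j)" (is "?lhs = _")
    proof -
      have "?lhs = real q * real (q - 1 choose j) * (real (p choose (m - j))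
                     * (1 + s) ^ (m - j + (q - Suc j)) * (1 - s) ^ Suc (j + (p - (m - j))))"
        by (simp add: algebra_simps)
      also have "\<dots> = real (Suc j) * T (Suc j)"
        unfolding of_nat_binomial_absorption T_def by (simp add: algebra_simps)
      finally show ?thesis .
    qed
  qed
  have "kraw_pairing s (Suc m) p q
      = fact m * ((\<Sum>j\<le>m. real (Suc m - j) * T j) + (\<Sum>j\<le>m. real (Suc j) * T (Suc j)))"
    unfolding kraw_pairing.simps Suc.IH p_branch[symmetric] q_branch[symmetric]
    by (simp only: distrib_left mult_ac)
  then show ?case
    unfolding sum_complementary_weights by (simp add: T_def)
qed

section \<open>Matrix elements of the squeezing unitary\<close>

lemma tanh_eq_if_cosh_eq_sqrt2:
  assumes "r > 0" "cosh r = sqrt 2"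
  shows "tanh r = 1 / sqrt 2"
proof -
  have "sinh r ^ 2 = 1" using cosh_square_eq[of r] assms by simp
  moreover have "sinh r > 0" using assms by simp
  ultimately have "sinh r = 1" by (simp add: power2_eq_1_iff)
  then show ?thesis using assms by (simp add: tanh_def)
qed

lemma sq_amp_summand_eq:
  fixes h F :: real
  assumes j: "j \<le> n" "j \<le> m"
  shows "(if n \<le> l + j then (- h) ^ j * h ^ (l + j - n) / (fact j * fact (l + j - n))
            * F / (fact (n - j) * fact (m - j)) * h ^ (n + m - 2 * j + 1) else 0)
       = h ^ (l + m + 1) * F / (fact m * fact l)
         * ((- 1) ^ j * of_nat (m choose j) * of_nat (l choose (n - j)))"
proof (cases "n \<le> l + j")
  case True
  have "l + m + 1 = j + (l + j - n) + (n + m - 2 * j + 1)" using True j by simp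
  then have "h ^ (l + m + 1) = h ^ j * h ^ (l + j - n) * h ^ (n + m - 2 * j + 1)"
    by (subst \<open>l + m + 1 = _\<close>) (simp only: power_add)
  then have h_pow: "(- h) ^ j * h ^ (l + j - n) * h ^ (n + m - 2 * j + 1) = (- 1) ^ j * h ^ (l + m + 1)"
    by (simp only: power_minus[of h j] mult.assoc)
  have "l - (n - j) = l + j - n" using True j by simp
  then have binom_l: "(of_nat (l choose (n - j)) :: real) = fact l / (fact (n - j) * fact (l + j - n))"
    using True j by (simp add: binomial_fact)
  have binom_m: "(of_nat (m choose j) :: real) = fact m / (fact j * fact (m - j))"
    using j by (simp add: binomial_fact)
  have "(- h) ^ j * h ^ (l + j - n) / (fact j * fact (l + j - n)) * F
          / (fact (n - j) * fact (m - j)) * h ^ (n + m - 2 * j + 1)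
      = ((- h) ^ j * h ^ (l + j - n) * h ^ (n + m - 2 * j + 1)) * F
          / (fact j * fact (l + j - n) * fact (n - j) * fact (m - j))"
    by (simp add: field_simps)
  also have "\<dots> = h ^ (l + m + 1) * F / (fact m * fact l)
                    * ((- 1) ^ j * of_nat (m choose j) * of_nat (l choose (n - j)))"
    unfolding h_pow binom_l binom_m by (simp add: field_simps)
  finally show ?thesis using True by simp
qed (simp add: binomial_eq_0)

lemma sq_amp_eq:
  assumes r: "r > 0" "cosh r = sqrt 2" and e: "l + m = k + n"
  shows "sq_amp r n m l k = sqrt (fact n * fact m * fact l * fact k) / (sqrt 2 ^ (l + m + 1) * fact m * fact l)
                             * coeff (krawtchouk_gf m l) n"
proof -
  define h :: real where "h = 1 / sqrt 2"
  define F :: real where "F = sqrt (fact n * fact m * fact l * fact k)"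
  have tanh: "tanh r = h" and sech: "1 / cosh r = h"
    using tanh_eq_if_cosh_eq_sqrt2[OF r] r by (simp_all add: h_def)
  have "sq_amp r n m l k = (\<Sum>j\<le>min n m.
      if n \<le> l + j then (- h) ^ j * h ^ (l + j - n) / (fact j * fact (l + j - n))
        * F / (fact (n - j) * fact (m - j)) * h ^ (n + m - 2 * j + 1) else 0)"
    unfolding sq_amp_def F_def tanh sech using e by simp
  also have "\<dots> = h ^ (l + m + 1) * F / (fact m * fact l)
      * (\<Sum>j\<le>min n m. (- 1) ^ j * of_nat (m choose j) * of_nat (l choose (n - j)))"
    unfolding sum_distrib_left by (intro sum.cong refl sq_amp_summand_eq) auto
  also have "(\<Sum>j\<le>min n m. (- 1) ^ j * of_nat (m choose j) * of_nat (l choose (n - j)))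
      = coeff (krawtchouk_gf m l) n"
    unfolding coeff_krawtchouk_gf by (intro sum.mono_neutral_left) (auto simp: binomial_eq_0)
  finally show ?thesis by (simp add: h_def F_def power_one_over)
qed

lemma sum_sq_amp:
  assumes "r > 0" "cosh r = sqrt 2"
  shows "(\<Sum>k. (sq_amp r n m l k)\<^sup>2)
           = fact n * fact (l + m - n) * (coeff (krawtchouk_gf m l) n)\<^sup>2 / (2 ^ (l + m + 1) * fact m * fact l)"
proof (cases "n \<le> l + m")
  case True
  define k where "k = l + m - n"
  define F :: real where "F = fact n * fact m * fact l * fact k"
  have e: "l + m = k + n" using True by (simp add: k_def)
  have "(\<Sum>k. (sq_amp r n m l k)\<^sup>2) = (\<Sum>k'\<in>{k}. (sq_amp r n m l k')\<^sup>2)"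
    by (rule suminf_finite) (auto simp: sq_amp_def k_def)
  also have "\<dots> = (sq_amp r n m l k)\<^sup>2"
    by simp
  also have "\<dots> = (sqrt F)\<^sup>2 / ((sqrt 2 ^ (l + m + 1))\<^sup>2 * (fact m)\<^sup>2 * (fact l)\<^sup>2)
                    * (coeff (krawtchouk_gf m l) n)\<^sup>2"
    by (simp only: sq_amp_eq[OF assms e] F_def power_mult_distrib power_divide)
  also have "(sqrt 2 ^ (l + m + 1))\<^sup>2 = (2 :: real) ^ (l + m + 1)"
    unfolding power_mult_distrib[symmetric] power2_eq_square by simp
  also have "(sqrt F)\<^sup>2 = F"
    by (simp add: F_def)
  finally show ?thesis
    by (simp add: F_def k_def power2_eq_square)
next
  case False
  then have "(\<Sum>k. (sq_amp r n m l k)\<^sup>2) = (\<Sum>k\<in>{}. (sq_amp r n m l k)\<^sup>2)"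
    by (intro suminf_finite) (auto simp: sq_amp_def)
  with False show ?thesis by (simp add: coeff_krawtchouk_gf_eq_0)
qed

section \<open>Stochastic order and mixtures\<close>

text \<open>
  \<open>negbin e j l\<close> is the probability that the \<open>(j + 1)\<close>-st success of a sequence of
  Bernoulli\<open>(e)\<close> trials occurs at trial \<open>l + 1\<close>.
\<close>

definition negbin :: "real \<Rightarrow> nat \<Rightarrow> nat \<Rightarrow> real" where
  "negbin e j l = of_nat (l choose j) * e ^ Suc j * (1 - e) ^ (l - j)"

definition negbin_mixture :: "real \<Rightarrow> nat \<Rightarrow> nat \<Rightarrow> real" where
  "negbin_mixture e m l = (\<Sum>j\<le>m. of_nat (m choose j) * e ^ j * (1 - e) ^ (m - j) * negbin e j l)"

lemma negbin_nonneg: "0 \<le> e \<Longrightarrow> e \<le> 1 \<Longrightarrow> 0 \<le> negbin e j l"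
  by (simp add: negbin_def)

lemma negbin_mixture_nonneg: "0 \<le> e \<Longrightarrow> e \<le> 1 \<Longrightarrow> 0 \<le> negbin_mixture e m l"
  unfolding negbin_mixture_def by (intro sum_nonneg mult_nonneg_nonneg negbin_nonneg) auto

lemma negbin_mixture_0: "negbin_mixture e 0 = negbin e 0"
  by (simp add: negbin_mixture_def fun_eq_iff)

text \<open>
  The sum on the left is the probability of at least \<open>k + 1\<close> successes in the first
  \<open>M + 1\<close> trials; the last term is the probability of exactly \<open>k + 1\<close>.
\<close>

lemma negbin_cdf_Suc:
  "(\<Sum>l\<le>M. negbin e k l)
     = (\<Sum>l\<le>M. negbin e (Suc k) l) + of_nat (Suc M choose Suc k) * e ^ Suc k * (1 - e) ^ (M - k)"
proof (induction M arbitrary: k)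
  case 0
  then show ?case by (cases k) (simp_all add: negbin_def)
next
  case (Suc M)
  have "of_nat (Suc M choose Suc k) * e ^ Suc k * (1 - e) ^ (M - k) + negbin e k (Suc M)
      = negbin e (Suc k) (Suc M) + of_nat (Suc (Suc M) choose Suc k) * e ^ Suc k * (1 - e) ^ (Suc M - k)"
  proof (cases "k \<le> M")
    case True
    then have pow: "(1 - e) ^ (Suc M - k) = (1 - e) * (1 - e) ^ (M - k)"
      by (simp add: Suc_diff_le)
    show ?thesis unfolding negbin_def pow by (simp add: algebra_simps)
  qed (simp add: negbin_def binomial_eq_0)
  then show ?case by (simp add: Suc.IH[of k])
qed

lemma stoch_le_negbin:
  assumes "0 \<le> e" "e \<le> 1" "j \<le> k"
  shows "stoch_le (negbin e j) (negbin e k)"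
  unfolding stoch_le_def
proof
  fix M
  show "(\<Sum>l\<le>M. negbin e k l) \<le> (\<Sum>l\<le>M. negbin e j l)"
  proof (rule lift_Suc_antimono_le[where f = "\<lambda>k. \<Sum>l\<le>M. negbin e k l", OF _ \<open>j \<le> k\<close>])
    fix k
    show "(\<Sum>l\<le>M. negbin e (Suc k) l) \<le> (\<Sum>l\<le>M. negbin e k l)"
      unfolding negbin_cdf_Suc[of e k M] using assms by simp
  qed
qed

lemma stoch_le_negbin_mixture:
  assumes "0 \<le> e" "e \<le> 1"
  shows "stoch_le (negbin_mixture e 0) (negbin_mixture e m)"
  unfolding stoch_le_def
proof
  fix M
  have "(\<Sum>l\<le>M. negbin_mixture e m l)
      = (\<Sum>j\<le>m. of_nat (m choose j) * e ^ j * (1 - e) ^ (m - j) * (\<Sum>l\<le>M. negbin e j l))"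
    unfolding negbin_mixture_def sum_distrib_left by (rule sum.swap)
  also have "\<dots> \<le> (\<Sum>j\<le>m. of_nat (m choose j) * e ^ j * (1 - e) ^ (m - j) * (\<Sum>l\<le>M. negbin e 0 l))"
  proof (rule sum_mono)
    fix j
    have "(\<Sum>l\<le>M. negbin e j l) \<le> (\<Sum>l\<le>M. negbin e 0 l)"
      using stoch_le_negbin[OF assms, of 0 j] by (simp add: stoch_le_def)
    then show "of_nat (m choose j) * e ^ j * (1 - e) ^ (m - j) * (\<Sum>l\<le>M. negbin e j l)
        \<le> of_nat (m choose j) * e ^ j * (1 - e) ^ (m - j) * (\<Sum>l\<le>M. negbin e 0 l)"
      using assms by (intro mult_left_mono) auto
  qed
  also have "\<dots> = (e + (1 - e)) ^ m * (\<Sum>l\<le>M. negbin e 0 l)"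
    unfolding binomial_ring sum_distrib_right by (simp add: algebra_simps)
  finally show "(\<Sum>l\<le>M. negbin_mixture e m l) \<le> (\<Sum>l\<le>M. negbin_mixture e 0 l)"
    by (simp add: negbin_mixture_0)
qed

lemma summable_mixture:
  fixes p :: "nat \<Rightarrow> real" and q :: "nat \<Rightarrow> nat \<Rightarrow> real"
  assumes "\<And>m. stoch_le p (q m)" and "\<And>m l. 0 \<le> q m l"
    and "\<And>m. 0 \<le> \<tau> m" and "summable \<tau>"
  shows "summable (\<lambda>m. \<tau> m * q m l)"
proof (rule summable_comparison_test')
  show "summable (\<lambda>m. \<tau> m * (\<Sum>l'\<le>l. p l'))"
    using \<open>summable \<tau>\<close> by (rule summable_mult2)
  fix m
  have "q m l \<le> (\<Sum>l'\<le>l. q m l')"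
    using assms(2) by (intro member_le_sum) auto
  also have "\<dots> \<le> (\<Sum>l'\<le>l. p l')"
    using assms(1) by (simp add: stoch_le_def)
  finally show "norm (\<tau> m * q m l) \<le> \<tau> m * (\<Sum>l'\<le>l. p l')"
    using assms(2,3) by (simp add: mult_left_mono)
qed

lemma stoch_le_mixture:
  fixes p :: "nat \<Rightarrow> real" and q :: "nat \<Rightarrow> nat \<Rightarrow> real"
  assumes le: "\<And>m. stoch_le p (q m)" and q: "\<And>m l. 0 \<le> q m l"
    and \<tau>: "\<And>m. 0 \<le> \<tau> m" "\<tau> sums 1"
  shows "stoch_le p (\<lambda>l. \<Sum>m. \<tau> m * q m l)"
  unfolding stoch_le_def
proof
  fix M
  have summable: "summable (\<lambda>m. \<tau> m * q m l)" for l
    using le q \<tau>(1) sums_summable[OF \<tau>(2)] by (rule summable_mixture)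
  have "(\<Sum>l\<le>M. \<Sum>m. \<tau> m * q m l) = (\<Sum>m. \<tau> m * (\<Sum>l\<le>M. q m l))"
    unfolding sum_distrib_left using summable by (rule suminf_sum[symmetric])
  also have "\<dots> \<le> (\<Sum>m. \<tau> m * (\<Sum>l\<le>M. p l))"
  proof (rule suminf_le)
    show "\<tau> m * (\<Sum>l\<le>M. q m l) \<le> \<tau> m * (\<Sum>l\<le>M. p l)" for m
      using le[of m] \<tau>(1)[of m] by (intro mult_left_mono) (auto simp: stoch_le_def)
    show "summable (\<lambda>m. \<tau> m * (\<Sum>l\<le>M. q m l))"
      unfolding sum_distrib_left using summable by (rule summable_sum)
    show "summable (\<lambda>m. \<tau> m * (\<Sum>l\<le>M. p l))"
      using sums_summable[OF \<tau>(2)] by (rule summable_mult2)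
  qed
  also have "\<dots> = (\<Sum>l\<le>M. p l)"
    using sums_unique[OF sums_mult2[OF \<tau>(2)]] by simp
  finally show "(\<Sum>l\<le>M. \<Sum>m. \<tau> m * q m l) \<le> (\<Sum>l\<le>M. p l)" .
qed

section \<open>Output of the amplifier\<close>

lemma negbin_mixture_eq_thermal_pairing:
  "negbin_mixture ((1 - s) / 2) m l
     = (1 - s) / (2 ^ (l + m + 1) * fact m * fact l)
       * thermal_pairing s (m + l) (krawtchouk_gf m l) (krawtchouk_gf m l)"
  unfolding thermal_pairing_krawtchouk_gf[OF refl] kraw_pairing_closed_form
    negbin_mixture_def negbin_def sum_distrib_left
proof (intro sum.cong refl)
  fix j assume "j \<in> {..m}"
  then have j: "j \<le> m" by simp
  show "of_nat (m choose j) * ((1 - s) / 2) ^ j * (1 - (1 - s) / 2) ^ (m - j)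
          * (of_nat (l choose j) * ((1 - s) / 2) ^ Suc j * (1 - (1 - s) / 2) ^ (l - j))
      = (1 - s) / (2 ^ (l + m + 1) * fact m * fact l) * (fact l * (fact m
          * (of_nat (m choose (m - j)) * of_nat (l choose j) * (1 + s) ^ (m - j + (l - j))
             * (1 - s) ^ (j + (m - (m - j))))))"
  proof (cases "j \<le> l")
    case True
    have "l + m + 1 = j + Suc j + (m - j) + (l - j)" using True j by simp
    then have two: "(2 :: real) ^ (l + m + 1) = 2 ^ j * 2 ^ Suc j * 2 ^ (m - j) * 2 ^ (l - j)"
      by (simp only: power_add)
    have "m - (m - j) = j" using j by simp
    then have one_minus: "(1 - s) ^ (j + (m - (m - j))) = (1 - s) ^ j * (1 - s) ^ j"
      by (simp add: power_add)
    have one_plus: "1 - (1 - s) / 2 = (1 + s) / (2 :: real)"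
      by (simp add: field_simps)
    show ?thesis
      unfolding two one_minus one_plus power_add[of "1 + s"] power_divide binomial_symmetric[OF j, symmetric]
      by (simp add: field_simps)
  qed (simp add: binomial_eq_0)
qed

lemma sums_thermal_sum_sq_amp:
  assumes "r > 0" "cosh r = sqrt 2"
  shows "(\<lambda>n. thermal s n * (\<Sum>k. (sq_amp r n m l k)\<^sup>2)) sums negbin_mixture ((1 - s) / 2) m l"
proof -
  have "(\<lambda>n. thermal s n * (\<Sum>k. (sq_amp r n m l k)\<^sup>2))
          sums (\<Sum>n\<le>m + l. thermal s n * (\<Sum>k. (sq_amp r n m l k)\<^sup>2))"
    by (rule sums_finite) (auto simp: sum_sq_amp[OF assms] coeff_krawtchouk_gf_eq_0)
  also have "(\<Sum>n\<le>m + l. thermal s n * (\<Sum>k. (sq_amp r n m l k)\<^sup>2))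
      = negbin_mixture ((1 - s) / 2) m l"
    unfolding negbin_mixture_eq_thermal_pairing sum_sq_amp[OF assms] thermal_pairing_def thermal_def
      sum_distrib_left
    by (intro sum.cong) (auto simp: add.commute power2_eq_square)
  finally show ?thesis .
qed

lemma suminf_swap_nonneg:
  fixes f :: "nat \<Rightarrow> nat \<Rightarrow> real"
  assumes nonneg: "\<And>n m. 0 \<le> f n m"
    and cols: "\<And>m. (\<lambda>n. f n m) sums g m" and "summable g"
  shows "(\<Sum>n. \<Sum>m. f n m) = (\<Sum>m. g m)"
proof -
  have cols': "((\<lambda>n. f n m) has_sum g m) UNIV" for m
    using cols nonneg by (rule sums_nonneg_imp_has_sum)
  have "0 \<le> g m" for m
    using cols' nonneg by (rule has_sum_nonneg)
  then have g: "(g has_sum (\<Sum>m. g m)) UNIV"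
    using \<open>summable g\<close> by (intro sums_nonneg_imp_has_sum summable_sums)
  have "(\<lambda>(m, n). f n m) summable_on UNIV \<times> UNIV"
    using cols' g nonneg by (intro summable_on_SigmaI[where g = g]) (auto dest: has_sum_imp_summable)
  then obtain S where S: "((\<lambda>(m, n). f n m) has_sum S) (UNIV \<times> UNIV)"
    by (auto simp: summable_on_def)
  have "(g has_sum S) UNIV"
    using cols' by (intro has_sum_Sigma'[OF S]) auto
  with g have "(\<Sum>m. g m) = S"
    by (rule has_sum_unique)
  with S have total: "((\<lambda>(n, m). f n m) has_sum (\<Sum>m. g m)) (UNIV \<times> UNIV)"
    by (subst has_sum_swap) simp
  have "summable (\<lambda>m. f n m)" for n
    using summable_on_SigmaD1[OF has_sum_imp_summable[OF total], of n] nonneg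
    by (simp add: summable_on_UNIV_nonneg_real_iff)
  then have "((\<lambda>m. f n m) has_sum (\<Sum>m. f n m)) UNIV" for n
    using nonneg by (intro sums_nonneg_imp_has_sum summable_sums)
  then have "((\<lambda>n. \<Sum>m. f n m) has_sum (\<Sum>m. g m)) UNIV"
    by (intro has_sum_Sigma'[OF total]) auto
  then show ?thesis
    by (intro sums_unique[symmetric] has_sum_imp_sums)
qed

lemma amp_out_eq_mixture:
  assumes r: "r > 0" "cosh r = sqrt 2" and s: "0 \<le> s" "s \<le> 1"
    and \<tau>: "\<And>m. 0 \<le> \<tau> m" "summable \<tau>"
  shows "amp_out r s \<tau> l = (\<Sum>m. \<tau> m * negbin_mixture ((1 - s) / 2) m l)"
  unfolding amp_out_def
proof (rule suminf_swap_nonneg)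
  show "0 \<le> thermal s n * \<tau> m * (\<Sum>k. (sq_amp r n m l k)\<^sup>2)" for n m
    using s \<tau>(1) by (simp add: sum_sq_amp[OF r] thermal_def)
  show "(\<lambda>n. thermal s n * \<tau> m * (\<Sum>k. (sq_amp r n m l k)\<^sup>2))
          sums (\<tau> m * negbin_mixture ((1 - s) / 2) m l)" for m
    using sums_mult[OF sums_thermal_sum_sq_amp[OF r], of "\<tau> m"] by (simp add: mult_ac)
  have "0 \<le> (1 - s) / 2" "(1 - s) / 2 \<le> 1"
    using s by simp_all
  then have "stoch_le (negbin_mixture ((1 - s) / 2) 0) (negbin_mixture ((1 - s) / 2) m)"
    and "0 \<le> negbin_mixture ((1 - s) / 2) m l'" for m l'
    by (simp_all add: stoch_le_negbin_mixture negbin_mixture_nonneg)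
  then show "summable (\<lambda>m. \<tau> m * negbin_mixture ((1 - s) / 2) m l)"
    using \<tau> by (rule summable_mixture)
qed

theorem lemma2:
  fixes r s :: real and \<tau> :: "nat \<Rightarrow> real"
  assumes "r > 0" and "cosh r = sqrt 2"
    and "0 < s" and "s < 1"
    and "\<And>m. \<tau> m \<ge> 0" and "\<tau> sums 1"
  shows "stoch_le (amp_out r s vacuum) (amp_out r s \<tau>)"
proof -
  define e where "e = (1 - s) / 2"
  have e: "0 \<le> e" "e \<le> 1"
    using assms(3,4) by (simp_all add: e_def)
  have vacuum: "amp_out r s vacuum = negbin_mixture e 0"
  proof
    fix l
    have "amp_out r s vacuum l = (\<Sum>m. vacuum m * negbin_mixture e m l)"
      unfolding e_def using assms(1-4)
      by (intro amp_out_eq_mixture summable_finite[of "{0}"]) (auto simp: vacuum_def)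
    also have "\<dots> = negbin_mixture e 0 l"
      by (subst suminf_finite[of "{0}"]) (auto simp: vacuum_def)
    finally show "amp_out r s vacuum l = negbin_mixture e 0 l" .
  qed
  have mixture: "amp_out r s \<tau> = (\<lambda>l. \<Sum>m. \<tau> m * negbin_mixture e m l)"
    unfolding e_def using assms sums_summable by (intro ext amp_out_eq_mixture) auto
  show ?thesis
    unfolding vacuum mixture using stoch_le_negbin_mixture[OF e] negbin_mixture_nonneg[OF e] assms(5,6)
    by (rule stoch_le_mixture)
qed

end
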